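(* Let $(X,d)$ be a compact metric space and $f\colon X\to X$ a continuous map. If $f$ has the shadowing property around $\overline{M(f)}$, then $f|_{\overline{M(f)}}\colon\overline{M(f)}\to\overline{M(f)}$ has the shadowing property.
   Context: $M(f)$ is the set of minimal points: $x$ such that $f$ restricted to $\overline{\{f^n(x):n\ge0\}}$ is minimal. For $S\subset X$, $f$ has the shadowing property around $S$ if for every $\epsilon>0$ there is $\delta>0$ such that every sequence $(x_i)_{i\ge0}\subset S$ with $d(f(x_i),x_{i+1})\le\delta$ for all $i$ admits $x\in X$ with $d(x_i,f^i(x))\le\epsilon$ for all $i$. The shadowing property for a map $g\colon Y\to Y$ is the same with $S=Y$ and the shadowing point required in $Y$. *)

theory Defs
  imports "HOL-Analysis.Analysis"
begin

definition orbit :: "('a \<Rightarrow> 'a) \<Rightarrow> 'a \<Rightarrow> 'a set" where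
  "orbit f x = {(f ^^ n) x | n. True}"

definition minimal_on :: "('a::metric_space \<Rightarrow> 'a) \<Rightarrow> 'a set \<Rightarrow> bool" where
  "minimal_on f Y \<longleftrightarrow> Y \<noteq> {} \<and> f ` Y \<subseteq> Y \<and>
     (\<forall>Z. Z \<subseteq> Y \<and> Z \<noteq> {} \<and> closed Z \<and> f ` Z \<subseteq> Z \<longrightarrow> Z = Y)"

definition minimal_points :: "'a set \<Rightarrow> ('a::metric_space \<Rightarrow> 'a) \<Rightarrow> 'a set" where
  "minimal_points X f = {x \<in> X. minimal_on f (closure (orbit f x))}"

definition shadowing_around :: "'a set \<Rightarrow> ('a::metric_space \<Rightarrow> 'a) \<Rightarrow> 'a set \<Rightarrow> bool" where
  "shadowing_around X f S \<longleftrightarrow>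
    (\<forall>\<epsilon>>0. \<exists>\<delta>>0. \<forall>xs::nat \<Rightarrow> 'a.
        (\<forall>i. xs i \<in> S) \<and> (\<forall>i. dist (f (xs i)) (xs (Suc i)) \<le> \<delta>) \<longrightarrow>
        (\<exists>x\<in>X. \<forall>i. dist (xs i) ((f ^^ i) x) \<le> \<epsilon>))"

definition shadowing :: "'a set \<Rightarrow> ('a::metric_space \<Rightarrow> 'a) \<Rightarrow> bool" where
  "shadowing Y g \<longleftrightarrow> shadowing_around Y g Y"

end

theory Submission
  imports Defs
begin

text \<open>
  Approximate a pseudo-orbit in the closure of \<open>M(f)\<close> by one in \<open>M(f)\<close>. A finite piece of it
  can be closed up into a periodic pseudo-orbit in \<open>M(f)\<close>, because minimal points return close
  to themselves. The points shadowing some shift of a periodic pseudo-orbit form a nonempty compact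
  invariant set, which therefore contains a minimal set; its points are minimal, and a suitable
  iterate of one of them shadows the periodic pseudo-orbit itself. Letting the length of the finite
  piece grow and passing to a limit point gives a shadowing point in the closure of \<open>M(f)\<close>.
\<close>

lemma funpow_mem: "f ` S \<subseteq> S \<Longrightarrow> x \<in> S \<Longrightarrow> (f ^^ n) x \<in> S"
  by (induction n) auto

lemma continuous_on_funpow:
  assumes "continuous_on S f" "f ` S \<subseteq> S"
  shows "continuous_on S (f ^^ n)"
proof (induction n)
  case (Suc n)
  have "continuous_on ((f ^^ n) ` S) f"
    by (rule continuous_on_subset[OF assms(1)]) (auto intro: funpow_mem[OF assms(2)])
  then have "continuous_on S (f \<circ> (f ^^ n))"
    using Suc by (rule continuous_on_compose[rotated])
  then show ?case by simp
qed (simp add: continuous_on_id)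

lemma funpow_mem_orbit: "(f ^^ n) x \<in> orbit f x"
  unfolding orbit_def by auto

lemma orbit_self: "x \<in> orbit f x"
  using funpow_mem_orbit[where n = 0] by simp

lemma image_orbit_subset: "f ` orbit f x \<subseteq> orbit f x"
proof
  fix y assume "y \<in> f ` orbit f x"
  then obtain n where "y = (f ^^ Suc n) x" unfolding orbit_def by auto
  then show "y \<in> orbit f x" unfolding orbit_def by blast
qed

lemma orbit_subset: "f ` S \<subseteq> S \<Longrightarrow> x \<in> S \<Longrightarrow> orbit f x \<subseteq> S"
  unfolding orbit_def by (auto intro: funpow_mem)

lemma minimal_onD:
  "minimal_on f K \<Longrightarrow> Z \<subseteq> K \<Longrightarrow> Z \<noteq> {} \<Longrightarrow> closed Z \<Longrightarrow> f ` Z \<subseteq> Z \<Longrightarrow> Z = K"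
  unfolding minimal_on_def by blast

lemma minimal_on_invariant: "minimal_on f K \<Longrightarrow> f ` K \<subseteq> K"
  unfolding minimal_on_def by blast

lemma minimal_on_closure_orbit:
  assumes K: "minimal_on f K" "closed K" "continuous_on K f" and "x \<in> K"
  shows "closure (orbit f x) = K"
proof (rule minimal_onD[OF K(1)])
  show sub: "closure (orbit f x) \<subseteq> K"
    using closure_minimal[OF orbit_subset[OF minimal_on_invariant[OF K(1)] \<open>x \<in> K\<close>] K(2)] .
  show "closure (orbit f x) \<noteq> {}"
    using orbit_self[of x f] by auto
  show "f ` closure (orbit f x) \<subseteq> closure (orbit f x)"
    using image_orbit_subset[of f x] closure_subset[of "orbit f x"]
    by (intro image_closure_subset[OF continuous_on_subset[OF K(3) sub] closed_closure]) blast
qed simp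

lemma closed_shadowing_points:
  assumes "closed X" "continuous_on X f" "f ` X \<subseteq> X"
  shows "closed {x \<in> X. \<forall>i\<in>I. dist (a i) ((f ^^ i) x) \<le> e}"
proof -
  have eq: "{x \<in> X. \<forall>i\<in>I. dist (a i) ((f ^^ i) x) \<le> e} = X \<inter> (\<Inter>i\<in>I. X \<inter> (f ^^ i) -` cball (a i) e)"
    by auto
  have "closed (X \<inter> (f ^^ i) -` cball (a i) e)" for i
    using continuous_closed_preimage[OF continuous_on_funpow[OF assms(2,3)] assms(1) closed_cball] .
  then have "closed (\<Inter>i\<in>I. X \<inter> (f ^^ i) -` cball (a i) e)"
    by (intro closed_INT) blast
  then show ?thesis
    unfolding eq using assms(1) by (rule closed_Int[rotated])
qed

lemma compact_Inter_chain_nonempty: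
  assumes "compact T" "\<Z> \<noteq> {}"
    and Z: "\<And>Z. Z \<in> \<Z> \<Longrightarrow> closed Z \<and> Z \<noteq> {} \<and> Z \<subseteq> T"
    and chain: "\<And>Y Z. Y \<in> \<Z> \<Longrightarrow> Z \<in> \<Z> \<Longrightarrow> Y \<subseteq> Z \<or> Z \<subseteq> Y"
  shows "\<Inter>\<Z> \<noteq> {}"
proof -
  have "T \<inter> \<Inter>\<Z> \<noteq> {}"
  proof (rule compact_imp_fip[OF assms(1)])
    fix \<F> assume "finite \<F>" "\<F> \<subseteq> \<Z>"
    show "T \<inter> \<Inter>\<F> \<noteq> {}"
    proof (cases "\<F> = {}")
      case True
      then show ?thesis using assms(2) Z by auto
    next
      case False
      have "subset.chain \<Z> \<F>"
        using \<open>\<F> \<subseteq> \<Z>\<close> chain by (auto simp: subset_chain_def)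
      then have "\<Inter>\<F> \<in> \<F>"
        using Inter_in_chain \<open>finite \<F>\<close> False by blast
      then show ?thesis using \<open>\<F> \<subseteq> \<Z>\<close> Z by blast
    qed
  qed (use Z in blast)
  then show ?thesis by blast
qed

lemma exists_minimal_subset:
  fixes f :: "'a::metric_space \<Rightarrow> 'a"
  assumes "compact T" "T \<noteq> {}" "f ` T \<subseteq> T"
  shows "\<exists>K\<subseteq>T. closed K \<and> minimal_on f K"
proof -
  define \<F> where "\<F> = {Z. Z \<subseteq> T \<and> Z \<noteq> {} \<and> closed Z \<and> f ` Z \<subseteq> Z}"
  have "T \<in> \<F>"
    using assms compact_imp_closed unfolding \<F>_def by blast
  \<comment> \<open>Zorn's lemma is applied to the complements, turning minimal elements into maximal ones.\<close>
  have "\<exists>U\<in>uminus ` \<F>. \<forall>C\<in>\<C>. C \<subseteq> U" if \<C>: "subset.chain (uminus ` \<F>) \<C>" for \<C>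
  proof (cases "\<C> = {}")
    case True
    then show ?thesis using \<open>T \<in> \<F>\<close> by blast
  next
    case False
    define I where "I = \<Inter>(uminus ` \<C>)"
    have "uminus ` \<C> \<subseteq> \<F>"
      using \<C> by (auto simp: subset_chain_def)
    then have Z: "Z \<subseteq> T \<and> Z \<noteq> {} \<and> closed Z \<and> f ` Z \<subseteq> Z" if "Z \<in> uminus ` \<C>" for Z
      using that unfolding \<F>_def by blast
    have chain: "Y \<subseteq> Z \<or> Z \<subseteq> Y" if "Y \<in> uminus ` \<C>" "Z \<in> uminus ` \<C>" for Y Z
      using that \<C> unfolding subset_chain_def by (metis Compl_subset_Compl_iff imageE)
    have "I \<noteq> {}"
      unfolding I_def using False Z by (intro compact_Inter_chain_nonempty[OF assms(1) _ _ chain]) auto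
    moreover obtain C\<^sub>0 where "C\<^sub>0 \<in> \<C>" using False by blast
    then have "I \<subseteq> T" unfolding I_def using Z by blast
    moreover have "closed I" unfolding I_def using Z by (intro closed_Inter) blast
    moreover have "f ` I \<subseteq> I" unfolding I_def using Z by blast
    ultimately have "I \<in> \<F>" unfolding \<F>_def by blast
    moreover have "C \<subseteq> - I" if "C \<in> \<C>" for C
      using that unfolding I_def by blast
    ultimately show ?thesis by blast
  qed
  from subset_Zorn[OF this]
  obtain U where U: "U \<in> uminus ` \<F>" "\<forall>V\<in>uminus ` \<F>. U \<subseteq> V \<longrightarrow> V = U"
    by blast
  then obtain K where K: "K \<in> \<F>" "U = - K" by blast
  have "minimal_on f K"
    unfolding minimal_on_def
  proof (intro conjI allI impI)
    show "K \<noteq> {}" "f ` K \<subseteq> K" using K(1) unfolding \<F>_def by auto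
    fix Z assume "Z \<subseteq> K \<and> Z \<noteq> {} \<and> closed Z \<and> f ` Z \<subseteq> Z"
    then have "Z \<in> \<F>" "- K \<subseteq> - Z" using K(1) unfolding \<F>_def by auto
    then have "- Z = - K" using U(2) K(2) by auto
    then show "Z = K" by simp
  qed
  then show ?thesis using K(1) unfolding \<F>_def by blast
qed

text \<open>
  \<open>L 0, \<dots>, L (P - 1)\<close> followed by \<open>L 0\<close> again is a pseudo-orbit with jumps at most \<open>\<theta> + \<gamma>\<close>; the
  closing jump is kept below \<open>\<theta>\<close> so that prepending a point at distance \<open>\<gamma>\<close> (lemma
  \<open>pseudo_cycle_Cons\<close>) does not increase the bound.
\<close>
definition pseudo_cycle :: "('a::metric_space \<Rightarrow> 'a) \<Rightarrow> real \<Rightarrow> real \<Rightarrow> (nat \<Rightarrow> 'a) \<Rightarrow> nat \<Rightarrow> bool"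
  where "pseudo_cycle f \<theta> \<gamma> L P \<longleftrightarrow> 0 < P \<and>
    (\<forall>i. Suc i < P \<longrightarrow> dist (f (L i)) (L (Suc i)) \<le> \<theta> + \<gamma>) \<and> dist (f (L (P - 1))) (L 0) \<le> \<theta>"

lemma pseudo_cycle_mod_jump:
  assumes "pseudo_cycle f \<theta> \<gamma> L P" "0 \<le> \<gamma>"
  shows "dist (f (L (i mod P))) (L (Suc i mod P)) \<le> \<theta> + \<gamma>"
proof (cases "Suc (i mod P) = P")
  case True
  then have "Suc i mod P = 0" "i mod P = P - 1" by (auto simp: mod_Suc)
  then show ?thesis using assms unfolding pseudo_cycle_def by auto
next
  case False
  moreover have "i mod P < P" using assms(1) unfolding pseudo_cycle_def by simp
  ultimately have "Suc i mod P = Suc (i mod P)" "Suc (i mod P) < P" by (auto simp: mod_Suc)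
  then show ?thesis using assms(1) unfolding pseudo_cycle_def by auto
qed

context
  fixes X :: "'a::metric_space set" and f :: "'a \<Rightarrow> 'a"
  assumes compact_X: "compact X" and continuous_f: "continuous_on X f" and f_X: "f ` X \<subseteq> X"
begin

lemma closed_X: "closed X"
  using compact_X by (rule compact_imp_closed)

lemma minimal_points_subset: "minimal_points X f \<subseteq> X"
  unfolding minimal_points_def by blast

lemma minimal_on_subset_minimal_points:
  assumes "minimal_on f K" "closed K" "K \<subseteq> X"
  shows "K \<subseteq> minimal_points X f"
  using minimal_on_closure_orbit[OF assms(1,2) continuous_on_subset[OF continuous_f assms(3)]] assms
  unfolding minimal_points_def by auto

lemma closure_orbit_subset_minimal_points:
  assumes "p \<in> minimal_points X f"
  shows "closure (orbit f p) \<subseteq> minimal_points X f"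
proof (rule minimal_on_subset_minimal_points)
  show "minimal_on f (closure (orbit f p))"
    using assms unfolding minimal_points_def by blast
  show "closure (orbit f p) \<subseteq> X"
    using assms minimal_points_subset orbit_subset[OF f_X] closure_minimal[OF _ closed_X] by blast
qed simp

lemma minimal_points_funpow: "p \<in> minimal_points X f \<Longrightarrow> (f ^^ n) p \<in> minimal_points X f"
  using closure_orbit_subset_minimal_points closure_subset[of "orbit f p"] funpow_mem_orbit[where f = f] by blast

lemma minimal_point_recurrent:
  assumes p: "p \<in> minimal_points X f" and "\<theta> > 0"
  shows "\<exists>k\<ge>m. dist ((f ^^ k) p) p < \<theta>"
proof -
  let ?K = "closure (orbit f p)"
  have K: "minimal_on f ?K" using p unfolding minimal_points_def by blast
  have "?K \<subseteq> X" using closure_orbit_subset_minimal_points[OF p] minimal_points_subset by blast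
  have "(f ^^ m) p \<in> ?K" using closure_subset funpow_mem_orbit[where f = f] by blast
  then have "closure (orbit f ((f ^^ m) p)) = ?K"
    by (rule minimal_on_closure_orbit[OF K closed_closure continuous_on_subset[OF continuous_f \<open>?K \<subseteq> X\<close>]])
  then have "p \<in> closure (orbit f ((f ^^ m) p))"
    using orbit_self[of p f] closure_subset[of "orbit f p"] by blast
  then obtain y where "y \<in> orbit f ((f ^^ m) p)" "dist y p < \<theta>"
    using \<open>\<theta> > 0\<close> closure_approachable by metis
  moreover from this obtain n where "y = (f ^^ n) ((f ^^ m) p)" unfolding orbit_def by blast
  then have "y = (f ^^ (n + m)) p" by (simp add: funpow_add)
  ultimately show ?thesis by (intro exI[of _ "n + m"]) auto
qed

lemma periodic_chain_shadowed_by_minimal_point: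
  assumes "0 < P" "z \<in> X" "\<forall>i. dist (L (i mod P)) ((f ^^ i) z) \<le> e"
  shows "\<exists>w\<in>minimal_points X f. \<forall>i. dist (L (i mod P)) ((f ^^ i) w) \<le> e"
proof -
  define S where "S j = {x \<in> X. \<forall>i\<in>UNIV. dist (L ((i + j) mod P)) ((f ^^ i) x) \<le> e}" for j
  define T where "T = (\<Union>j<P. S j)"
  have S_mod: "S j = S (j mod P)" for j
    unfolding S_def by (simp add: mod_add_right_eq)
  have "T \<subseteq> X" unfolding T_def S_def by blast
  moreover have "closed T"
    unfolding T_def S_def
    by (intro closed_UN ballI closed_shadowing_points[OF closed_X continuous_f f_X]) auto
  ultimately have "compact T"
    using compact_Int_closed[OF compact_X] by (metis inf.absorb2)
  moreover have "z \<in> S 0"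
    using assms(2,3) unfolding S_def by simp
  then have "T \<noteq> {}"
    using \<open>0 < P\<close> unfolding T_def by blast
  moreover have "f ` T \<subseteq> T"
  proof
    fix y assume "y \<in> f ` T"
    then obtain x j where x: "x \<in> S j" "y = f x" unfolding T_def by blast
    have "dist (L ((i + Suc j) mod P)) ((f ^^ i) y) \<le> e" for i
    proof -
      have "dist (L ((Suc i + j) mod P)) ((f ^^ Suc i) x) \<le> e"
        using x(1) unfolding S_def by blast
      then show ?thesis using x(2) by (simp add: funpow_swap1)
    qed
    then have "y \<in> S (Suc j)"
      using x f_X unfolding S_def by auto
    then show "y \<in> T"
      unfolding T_def using S_mod[of "Suc j"] \<open>0 < P\<close> by auto
  qed
  ultimately obtain K where K: "K \<subseteq> T" "closed K" "minimal_on f K"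
    using exists_minimal_subset by metis
  then have KM: "K \<subseteq> minimal_points X f"
    using minimal_on_subset_minimal_points \<open>T \<subseteq> X\<close> by (meson order_trans)
  obtain u where "u \<in> K"
    using K(3) unfolding minimal_on_def by blast
  then obtain j where u: "u \<in> S j" "j < P"
    using K(1) unfolding T_def by blast
  define w where "w = (f ^^ (P - j)) u"
  have "w \<in> K"
    unfolding w_def using funpow_mem[OF minimal_on_invariant[OF K(3)] \<open>u \<in> K\<close>] .
  moreover have "dist (L (i mod P)) ((f ^^ i) w) \<le> e" for i
  proof -
    have "dist (L ((i + (P - j) + j) mod P)) ((f ^^ (i + (P - j))) u) \<le> e"
      using u(1) unfolding S_def by blast
    moreover have "(i + (P - j) + j) mod P = i mod P"
      using \<open>j < P\<close> by simp
    ultimately show ?thesis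
      unfolding w_def by (simp add: funpow_add)
  qed
  ultimately show ?thesis
    using KM by blast
qed

lemma return_pseudo_cycle:
  assumes "p \<in> minimal_points X f" "\<theta> > 0" "0 \<le> \<gamma>"
  shows "\<exists>P. pseudo_cycle f \<theta> \<gamma> (\<lambda>i. (f ^^ i) p) P"
proof -
  obtain k where k: "k \<ge> 1" "dist ((f ^^ k) p) p < \<theta>"
    using minimal_point_recurrent[OF assms(1,2)] by blast
  then have "f ((f ^^ (k - 1)) p) = (f ^^ k) p"
    by (cases k) auto
  then have "pseudo_cycle f \<theta> \<gamma> (\<lambda>i. (f ^^ i) p) k"
    using k assms(2,3) unfolding pseudo_cycle_def by auto
  then show ?thesis ..
qed

lemma pseudo_cycle_Cons:
  assumes L: "pseudo_cycle f \<theta> \<gamma> L P" "\<forall>i<P. L i \<in> minimal_points X f"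
    and p: "p \<in> minimal_points X f" "dist (f p) (L 0) \<le> \<gamma>" and "\<theta> > 0"
  shows "\<exists>L' P'. pseudo_cycle f \<theta> \<gamma> L' P' \<and> (\<forall>i<P'. L' i \<in> minimal_points X f) \<and>
    P < P' \<and> L' 0 = p \<and> (\<forall>i<P. L' (Suc i) = L i)"
proof -
  obtain k where k: "k \<ge> 2" "dist ((f ^^ k) p) p < \<theta>"
    using minimal_point_recurrent[OF p(1) \<open>\<theta> > 0\<close>] by blast
  have "0 < P" using L(1) unfolding pseudo_cycle_def by blast
  have "0 \<le> \<gamma>" using p(2) zero_le_dist[of "f p" "L 0"] by linarith
  \<comment> \<open>First \<open>p\<close>, then the cycle \<open>L\<close>, then the orbit of \<open>p\<close> until it returns close to \<open>p\<close>.\<close>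
  define L' where "L' i = (if i = 0 then p else if i \<le> P then L (i - 1) else (f ^^ (i - P)) p)" for i
  have jump: "dist (f (L' i)) (L' (Suc i)) \<le> \<theta> + \<gamma>" if "Suc i < P + k" for i
  proof -
    consider "i = 0" | "0 < i" "i < P" | "i = P" | "P < i" by linarith
    then show ?thesis
    proof cases
      case 1
      then show ?thesis using p(2) \<open>0 < P\<close> \<open>\<theta> > 0\<close> unfolding L'_def by simp
    next
      case 2
      then have "L' i = L (i - 1)" "L' (Suc i) = L (Suc (i - 1))" "Suc (i - 1) < P"
        unfolding L'_def by auto
      then show ?thesis using L(1) unfolding pseudo_cycle_def by presburger
    next
      case 3
      have "dist (f (L (P - 1))) (f p) \<le> dist (f (L (P - 1))) (L 0) + dist (L 0) (f p)"
        by (rule dist_triangle)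
      moreover have "L' i = L (P - 1)" "L' (Suc i) = f p"
        using 3 \<open>0 < P\<close> unfolding L'_def by auto
      ultimately show ?thesis using L(1) p(2) unfolding pseudo_cycle_def by (simp add: dist_commute)
    next
      case 4
      then have "L' (Suc i) = f (L' i)" unfolding L'_def by (simp add: Suc_diff_le)
      then show ?thesis using \<open>\<theta> > 0\<close> \<open>0 \<le> \<gamma>\<close> by simp
    qed
  qed
  have start: "L' 0 = p" "\<forall>i<P. L' (Suc i) = L i"
    unfolding L'_def by auto
  have "L' (P + k - 1) = (f ^^ (k - 1)) p"
    unfolding L'_def using k by auto
  moreover have "f ((f ^^ (k - 1)) p) = (f ^^ k) p"
    using k by (cases k) auto
  ultimately have "pseudo_cycle f \<theta> \<gamma> L' (P + k)"
    using jump k start(1) unfolding pseudo_cycle_def by auto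
  moreover have "\<forall>i<P + k. L' i \<in> minimal_points X f"
    unfolding L'_def using p(1) L(2) minimal_points_funpow by auto
  ultimately show ?thesis
    using k start by (intro exI[of _ L'] exI[of _ "P + k"]) auto
qed

lemma chain_extends_to_pseudo_cycle:
  assumes "\<theta> > 0" "0 \<le> \<gamma>"
  shows "\<forall>i<N. dist (f (p i)) (p (Suc i)) \<le> \<gamma> \<Longrightarrow> \<forall>i\<le>N. p i \<in> minimal_points X f \<Longrightarrow>
    \<exists>L P. pseudo_cycle f \<theta> \<gamma> L P \<and> (\<forall>i<P. L i \<in> minimal_points X f) \<and> N < P \<and> (\<forall>i\<le>N. L i = p i)"
proof (induction N arbitrary: p)
  case 0
  then obtain P where "pseudo_cycle f \<theta> \<gamma> (\<lambda>i. (f ^^ i) (p 0)) P"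
    using return_pseudo_cycle assms by blast
  then show ?case
    using 0 minimal_points_funpow unfolding pseudo_cycle_def by (intro exI[of _ "\<lambda>i. (f ^^ i) (p 0)"]) auto
next
  case (Suc N)
  have "\<forall>i<N. dist (f ((p \<circ> Suc) i)) ((p \<circ> Suc) (Suc i)) \<le> \<gamma>"
    "\<forall>i\<le>N. (p \<circ> Suc) i \<in> minimal_points X f"
    using Suc.prems by auto
  from Suc.IH[OF this] obtain L P where L: "pseudo_cycle f \<theta> \<gamma> L P"
    "\<forall>i<P. L i \<in> minimal_points X f" "N < P" "\<forall>i\<le>N. L i = p (Suc i)"
    by auto
  moreover have "dist (f (p 0)) (L 0) \<le> \<gamma>" "p 0 \<in> minimal_points X f"
    using Suc.prems L(4) by auto
  ultimately obtain L' P' where L': "pseudo_cycle f \<theta> \<gamma> L' P'" "\<forall>i<P'. L' i \<in> minimal_points X f"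
    "P < P'" "L' 0 = p 0" "\<forall>i<P. L' (Suc i) = L i"
    using pseudo_cycle_Cons \<open>\<theta> > 0\<close> by blast
  moreover have "L' i = p i" if "i \<le> Suc N" for i
    using that L(3,4) L'(4,5) by (cases i) auto
  ultimately show ?case using L(3) by (intro exI[of _ L'] exI[of _ P']) auto
qed

lemma minimal_chain_shadowed_on_initial_segments:
  assumes shadow: "\<And>ys. \<forall>i. ys i \<in> closure (minimal_points X f) \<Longrightarrow>
      \<forall>i. dist (f (ys i)) (ys (Suc i)) \<le> \<delta> \<Longrightarrow> \<exists>x\<in>X. \<forall>i. dist (ys i) ((f ^^ i) x) \<le> e"
    and p: "\<forall>i. p i \<in> minimal_points X f" "\<forall>i. dist (f (p i)) (p (Suc i)) \<le> \<gamma>" and "\<gamma> < \<delta>"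
  shows "\<exists>w\<in>minimal_points X f. \<forall>i\<le>N. dist (p i) ((f ^^ i) w) \<le> e"
proof -
  have "0 \<le> \<gamma>"
    using spec[OF p(2), of 0] zero_le_dist[of "f (p 0)" "p (Suc 0)"] by linarith
  obtain L P where L: "pseudo_cycle f (\<delta> - \<gamma>) \<gamma> L P" "\<forall>i<P. L i \<in> minimal_points X f"
      "N < P" "\<forall>i\<le>N. L i = p i"
    using chain_extends_to_pseudo_cycle[where \<theta> = "\<delta> - \<gamma>" and \<gamma> = \<gamma> and N = N and p = p]
      p \<open>\<gamma> < \<delta>\<close> \<open>0 \<le> \<gamma>\<close> by auto
  define \<eta> where "\<eta> i = L (i mod P)" for i
  have "0 < P" using L(3) by simp
  then have "\<eta> i \<in> minimal_points X f" for i
    unfolding \<eta>_def using L(2) by simp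
  then have "\<eta> i \<in> closure (minimal_points X f)" for i
    using closure_subset by blast
  moreover have "dist (f (\<eta> i)) (\<eta> (Suc i)) \<le> \<delta>" for i
    unfolding \<eta>_def using pseudo_cycle_mod_jump[OF L(1) \<open>0 \<le> \<gamma>\<close>] by simp
  ultimately obtain z where "z \<in> X" "\<forall>i. dist (L (i mod P)) ((f ^^ i) z) \<le> e"
    using shadow[of \<eta>] unfolding \<eta>_def by blast
  then obtain w where "w \<in> minimal_points X f" "\<forall>i. dist (L (i mod P)) ((f ^^ i) w) \<le> e"
    using periodic_chain_shadowed_by_minimal_point[OF \<open>0 < P\<close>] by blast
  moreover have "L (i mod P) = p i" if "i \<le> N" for i
    using that L(3,4) by simp
  ultimately show ?thesis
    by metis
qed

lemma shadowing_point_in_closure: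
  assumes "A \<subseteq> X" and shadow: "\<And>N. \<exists>w\<in>A. \<forall>i\<le>N. dist (p i) ((f ^^ i) w) \<le> e"
  shows "\<exists>x\<in>closure A. \<forall>i. dist (p i) ((f ^^ i) x) \<le> e"
proof -
  define C where "C N = closure A \<inter> {x \<in> X. \<forall>i\<in>{..N}. dist (p i) ((f ^^ i) x) \<le> e}" for N
  have C_antimono: "C N \<subseteq> C M" if "M \<le> N" for M N
    unfolding C_def using that by auto
  have "\<Inter>(range C) \<noteq> {}"
  proof (rule compact_Inter_chain_nonempty[OF compact_X])
    fix Z assume "Z \<in> range C"
    then obtain N where N: "Z = C N" by blast
    obtain w where "w \<in> A" "\<forall>i\<le>N. dist (p i) ((f ^^ i) w) \<le> e"
      using shadow by blast
    then have "w \<in> C N"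
      unfolding C_def using \<open>A \<subseteq> X\<close> closure_subset by auto
    moreover have "closed (C N)"
      unfolding C_def by (intro closed_Int closed_closure closed_shadowing_points[OF closed_X continuous_f f_X])
    ultimately show "closed Z \<and> Z \<noteq> {} \<and> Z \<subseteq> X"
      unfolding N by (auto simp: C_def)
  next
    fix Y Z assume "Y \<in> range C" "Z \<in> range C"
    then obtain M N where "Y = C M" "Z = C N" by blast
    then show "Y \<subseteq> Z \<or> Z \<subseteq> Y"
      using C_antimono[of M N] C_antimono[of N M] by (cases "M \<le> N") auto
  qed simp
  then obtain x where "\<forall>N. x \<in> C N" by blast
  then show ?thesis
    unfolding C_def by blast
qed

lemma exists_approximating_chain:
  assumes "A \<subseteq> X" "\<forall>i. xs i \<in> closure A" "\<alpha> > 0"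
  obtains q where "\<And>i. q i \<in> A" "\<And>i. dist (q i) (xs i) < \<alpha>"
    "\<And>i. dist (f (q i)) (q (Suc i)) \<le> dist (f (xs i)) (xs (Suc i)) + 2 * \<alpha>"
proof -
  have "closure A \<subseteq> X"
    using closure_minimal[OF assms(1) closed_X] .
  have "\<exists>y\<in>A. dist y (xs i) < \<alpha> \<and> dist (f y) (f (xs i)) < \<alpha>" for i
  proof -
    have "xs i \<in> X" using assms(2) \<open>closure A \<subseteq> X\<close> by blast
    then obtain d where d: "d > 0" "\<forall>y\<in>X. dist y (xs i) < d \<longrightarrow> dist (f y) (f (xs i)) < \<alpha>"
      using continuous_f[unfolded continuous_on_iff, rule_format, OF _ \<open>\<alpha> > 0\<close>] by blast
    obtain y where "y \<in> A" "dist y (xs i) < min d \<alpha>"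
      using assms(2)[rule_format, of i, unfolded closure_approachable, rule_format, of "min d \<alpha>"]
        d(1) \<open>\<alpha> > 0\<close> by auto
    then show ?thesis using d \<open>A \<subseteq> X\<close> by auto
  qed
  then obtain q where q: "\<And>i. q i \<in> A" "\<And>i. dist (q i) (xs i) < \<alpha>"
    "\<And>i. dist (f (q i)) (f (xs i)) < \<alpha>"
    by metis
  have "dist (f (q i)) (q (Suc i)) \<le> dist (f (xs i)) (xs (Suc i)) + 2 * \<alpha>" for i
  proof -
    have "dist (f (q i)) (q (Suc i))
        \<le> dist (f (q i)) (f (xs i)) + dist (f (xs i)) (xs (Suc i)) + dist (xs (Suc i)) (q (Suc i))"
      using dist_triangle[of "f (q i)" "q (Suc i)" "f (xs i)"]
        dist_triangle[of "f (xs i)" "q (Suc i)" "xs (Suc i)"] by linarith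
    then show ?thesis
      using q(2)[of "Suc i"] q(3)[of i] by (simp add: dist_commute)
  qed
  then show thesis
    using that q(1,2) by blast
qed

lemma chains_in_closure_shadowed_within_closure:
  assumes shadow: "\<And>ys. \<forall>i. ys i \<in> closure (minimal_points X f) \<Longrightarrow>
      \<forall>i. dist (f (ys i)) (ys (Suc i)) \<le> \<delta> \<Longrightarrow> \<exists>x\<in>X. \<forall>i. dist (ys i) ((f ^^ i) x) \<le> e"
    and "\<delta> > 0" "e > 0"
    and xs: "\<forall>i. xs i \<in> closure (minimal_points X f)" "\<forall>i. dist (f (xs i)) (xs (Suc i)) \<le> \<delta> / 2"
  shows "\<exists>x\<in>closure (minimal_points X f). \<forall>i. dist (xs i) ((f ^^ i) x) \<le> 2 * e"
proof -
  define \<alpha> where "\<alpha> = min (\<delta> / 8) e"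
  have "\<alpha> > 0" unfolding \<alpha>_def using assms(2,3) by simp
  then obtain q where q: "\<And>i. q i \<in> minimal_points X f" "\<And>i. dist (q i) (xs i) < \<alpha>"
    "\<And>i. dist (f (q i)) (q (Suc i)) \<le> dist (f (xs i)) (xs (Suc i)) + 2 * \<alpha>"
    using exists_approximating_chain[OF minimal_points_subset xs(1)] by blast
  have "\<alpha> \<le> \<delta> / 8" "\<alpha> \<le> e" unfolding \<alpha>_def by simp_all
  \<comment> \<open>The slack \<open>\<delta>/4\<close> left below \<open>\<delta>\<close> is what allows closing finite pieces into pseudo-cycles.\<close>
  have jump: "\<forall>i. dist (f (q i)) (q (Suc i)) \<le> 3 / 4 * \<delta>"
  proof
    fix i
    show "dist (f (q i)) (q (Suc i)) \<le> 3 / 4 * \<delta>"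
      using q(3)[of i] spec[OF xs(2), of i] \<open>\<alpha> \<le> \<delta> / 8\<close> by linarith
  qed
  have "\<exists>w\<in>minimal_points X f. \<forall>i\<le>N. dist (q i) ((f ^^ i) w) \<le> e" for N
    using minimal_chain_shadowed_on_initial_segments[OF shadow _ jump] q(1) \<open>\<delta> > 0\<close>
    by simp
  then obtain x where x: "x \<in> closure (minimal_points X f)" "\<forall>i. dist (q i) ((f ^^ i) x) \<le> e"
    using shadowing_point_in_closure[OF minimal_points_subset] by blast
  have "dist (xs i) ((f ^^ i) x) \<le> 2 * e" for i
    using dist_triangle3[of "xs i" "(f ^^ i) x" "q i"] q(2)[of i] spec[OF x(2), of i]
      \<open>\<alpha> \<le> e\<close> by linarith
  then show ?thesis
    using x(1) by blast
qed

end

theorem lemma2p2: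
  fixes X :: "'a::metric_space set" and f :: "'a \<Rightarrow> 'a"
  assumes "compact X"
    and "continuous_on X f"
    and "f ` X \<subseteq> X"
    and "shadowing_around X f (closure (minimal_points X f))"
  shows "shadowing (closure (minimal_points X f)) f"
  unfolding shadowing_def shadowing_around_def
proof (intro allI impI)
  let ?M = "minimal_points X f"
  fix \<epsilon> :: real assume "\<epsilon> > 0"
  then have "\<epsilon> / 2 > 0" by simp
  from assms(4)[unfolded shadowing_around_def, rule_format, OF this]
  obtain \<delta> where "\<delta> > 0" and shadow: "\<forall>ys. (\<forall>i. ys i \<in> closure ?M) \<and>
      (\<forall>i. dist (f (ys i)) (ys (Suc i)) \<le> \<delta>) \<longrightarrow> (\<exists>x\<in>X. \<forall>i. dist (ys i) ((f ^^ i) x) \<le> \<epsilon> / 2)"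
    by blast
  have "\<exists>x\<in>closure ?M. \<forall>i. dist (xs i) ((f ^^ i) x) \<le> \<epsilon>"
    if "(\<forall>i. xs i \<in> closure ?M) \<and> (\<forall>i. dist (f (xs i)) (xs (Suc i)) \<le> \<delta> / 2)" for xs
    using chains_in_closure_shadowed_within_closure[OF assms(1-3) shadow[rule_format, OF conjI]
        \<open>\<delta> > 0\<close> \<open>\<epsilon> / 2 > 0\<close>] that
    by simp
  then show "\<exists>\<delta>>0. \<forall>xs. (\<forall>i. xs i \<in> closure ?M) \<and> (\<forall>i. dist (f (xs i)) (xs (Suc i)) \<le> \<delta>) \<longrightarrow>
      (\<exists>x\<in>closure ?M. \<forall>i. dist (xs i) ((f ^^ i) x) \<le> \<epsilon>)"
    using \<open>\<delta> > 0\<close> half_gt_zero by blast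
qed

end
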